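(* For every natural number $n\geq 2$, the $n$-Split Interval $S_n(I)$ is a Rosenthal compactum.
   Context: A Rosenthal compactum is a topological space homeomorphic to a compact subset of $\mathcal{B}_1(\mathbb{N}^{\mathbb{N}})$, the space of real-valued functions of the first Baire class on the Baire space $\mathbb{N}^{\mathbb{N}}$ (pointwise limits of sequences of continuous functions), endowed with the topology of pointwise convergence. Let $I=[0,1]$. For $n\geq 2$, $S_n(I)$ is the set $I\times\{0,\ldots,n-1\}$ with the topology in which the points $(x,i)$ with $i\in\{2,\ldots,n-1\}$ are isolated, a point $(x,0)$ with $x>0$ has basic neighbourhoods $\{(x,0)\}\cup\{(y,i): z_0<y<x,\ i\in\{0,\ldots,n-1\}\}$ for $z_0\in I$, $z_0<x$, a point $(x,1)$ with $x<1$ has basic neighbourhoods $\{(x,1)\}\cup\{(y,i): x<y<z_1,\ i\in\{0,\ldots,n-1\}\}$ for $z_1\in I$, $z_1>x$, and the points $(0,0)$ and $(1,1)$ are isolated. *)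

theory Defs
  imports "HOL-Analysis.Analysis"
begin

text \<open>Baire space: the type nat \<Rightarrow> nat with the product topology (nat discrete),
  which is the library's topology instance on function types.\<close>

definition baire_class1 :: "((nat \<Rightarrow> nat) \<Rightarrow> real) set" where
  "baire_class1 = {f. \<exists>g :: nat \<Rightarrow> (nat \<Rightarrow> nat) \<Rightarrow> real.
      (\<forall>k. continuous_on UNIV (g k)) \<and> (\<forall>x. (\<lambda>k. g k x) \<longlonglongrightarrow> f x)}"

text \<open>Rosenthal compactum: homeomorphic to a compact subset of B_1(N^N) with the
  topology of pointwise convergence (product topology on (nat\<Rightarrow>nat) \<Rightarrow> real).\<close>

definition rosenthal_compactum :: "'a topology \<Rightarrow> bool" where
  "rosenthal_compactum X \<longleftrightarrow>
     (\<exists>K. K \<subseteq> baire_class1 \<and> compact K \<and> X homeomorphic_space top_of_set K)"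

definition split_interval_basis :: "nat \<Rightarrow> (real \<times> nat) set set" where
  "split_interval_basis n =
     {{(x, i)} | x i. x \<in> {0..1} \<and> 2 \<le> i \<and> i < n}
   \<union> {{(0, 0)}, {(1, 1)}}
   \<union> {insert (x, 0) {(y, i). z0 < y \<and> y < x \<and> i < n} | x z0.
        x \<in> {0..1} \<and> 0 < x \<and> z0 \<in> {0..1} \<and> z0 < x}
   \<union> {insert (x, 1) {(y, i). x < y \<and> y < z1 \<and> i < n} | x z1.
        x \<in> {0..1} \<and> x < 1 \<and> z1 \<in> {0..1} \<and> x < z1}"

definition split_interval :: "nat \<Rightarrow> (real \<times> nat) topology" where
  "split_interval n = topology_generated_by (split_interval_basis n)"

end

theory Submission
  imports Defs
begin

text \<open>Code a point (x, i) of the split interval by the step function that drops from 1 to 0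
  at x and takes at x a value determined by i. Precomposed with the binary expansion map of the
  Baire space onto [0, 1], a step function is a pointwise limit of continuous ramps, so every
  code is of the first Baire class. For fixed t the value of the code at t is locally constant on
  the split interval, so the coding is continuous into the pointwise topology; it is injective,
  and the split interval is compact by a real induction along [0, 1]. A continuous injection of
  a compact space into a Hausdorff space is an embedding.\<close>

section \<open>Binary expansions\<close>

definition binary_value :: "(nat \<Rightarrow> nat) \<Rightarrow> real" where
  "binary_value w = (\<Sum>k. (if w k = 0 then 0 else 1) / 2 ^ Suc k)"

lemma continuous_on_binary_value: "continuous_on UNIV binary_value"
proof -
  let ?digit = "\<lambda>k (w::nat \<Rightarrow> nat). (if w k = 0 then 0 else 1) / (2::real) ^ Suc k"
  have "summable (\<lambda>k. 1 / (2::real) ^ Suc k)"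
    using summable_mult[OF summable_geometric[of "1/2::real"], of "1/2"] by (simp add: power_one_over)
  then have limit: "uniform_limit UNIV (\<lambda>N w. \<Sum>k<N. ?digit k w) (\<lambda>w. \<Sum>k. ?digit k w) sequentially"
    by (intro Weierstrass_m_test[where M = "\<lambda>k. 1 / 2 ^ Suc k"]) auto
  have digit: "continuous_on UNIV (?digit k)" for k
  proof -
    have "continuous_on UNIV (\<lambda>m::nat. (if m = 0 then 0 else 1) / (2::real) ^ Suc k)"
      by (simp add: continuous_on_discrete)
    from continuous_on_compose2[OF this continuous_on_product_coordinates[of k]]
    show ?thesis by simp
  qed
  have "continuous_on UNIV (\<lambda>w. \<Sum>k. ?digit k w)"
    by (rule uniform_limit_theorem[OF _ limit]) (intro always_eventually allI continuous_on_sum digit, simp_all)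
  then show ?thesis
    unfolding binary_value_def[abs_def] .
qed

text \<open>Greedy dyadic approximations of x from below; their increments are the binary digits
  of x.\<close>

fun dyadic_floor :: "real \<Rightarrow> nat \<Rightarrow> real" where
  "dyadic_floor x 0 = 0"
| "dyadic_floor x (Suc k) =
     (if dyadic_floor x k + 1 / 2 ^ Suc k \<le> x then dyadic_floor x k + 1 / 2 ^ Suc k
      else dyadic_floor x k)"

lemma dyadic_floor_bounds:
  assumes "x \<in> {0..1}"
  shows "dyadic_floor x k \<le> x \<and> x \<le> dyadic_floor x k + 1 / 2 ^ k"
proof (induction k)
  case (Suc k)
  have "1 / (2::real) ^ k = 2 * (1 / 2 ^ Suc k)" by simp
  with Suc show ?case
    by (simp only: dyadic_floor.simps split: if_split) (intro conjI impI TrueI; linarith)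
qed (use assms in auto)

lemma dyadic_floor_tendsto:
  assumes "x \<in> {0..1}"
  shows "dyadic_floor x \<longlonglongrightarrow> x"
proof (rule tendsto_sandwich)
  show "\<forall>\<^sub>F k in sequentially. x - (1/2) ^ k \<le> dyadic_floor x k"
    "\<forall>\<^sub>F k in sequentially. dyadic_floor x k \<le> x"
    using dyadic_floor_bounds[OF assms] by (auto simp: algebra_simps power_one_over)
  show "(\<lambda>k. x - (1/2) ^ k) \<longlonglongrightarrow> x"
    using tendsto_diff[OF tendsto_const LIMSEQ_realpow_zero[of "1/2::real"]] by simp
qed simp

lemma binary_value_surj:
  assumes "x \<in> {0..1}"
  shows "\<exists>w. binary_value w = x"
proof -
  define w where "w k = (if dyadic_floor x (Suc k) = dyadic_floor x k then 0 else 1::nat)" for k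
  have "(\<Sum>k<N. (if w k = 0 then 0 else 1) / (2::real) ^ Suc k) = dyadic_floor x N" for N
    by (induction N) (auto simp: w_def)
  then have "(\<lambda>k. (if w k = 0 then 0 else 1) / (2::real) ^ Suc k) sums x"
    using dyadic_floor_tendsto[OF assms] unfolding sums_def by simp
  then have "binary_value w = x"
    unfolding binary_value_def by (simp add: sums_iff)
  then show ?thesis by blast
qed

section \<open>Step functions of the first Baire class\<close>

lemma baire_class1_comp_continuous:
  assumes "\<And>k. continuous_on UNIV (h k)" "\<And>t. (\<lambda>k. h k t) \<longlonglongrightarrow> f t"
    and "continuous_on UNIV g"
  shows "(\<lambda>w. f (g w)) \<in> baire_class1"
  unfolding baire_class1_def
proof (intro CollectI exI[of _ "\<lambda>k w. h k (g w)"] conjI allI)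
  show "continuous_on UNIV (\<lambda>w. h k (g w))" for k
    using continuous_on_compose2[OF assms(1) assms(3)] by simp
qed (rule assms(2))

definition step_at :: "real \<Rightarrow> real \<Rightarrow> real \<Rightarrow> real" where
  "step_at x c t = (if t < x then 1 else if t = x then c else 0)"

lemma eventually_one_le_real_mult:
  assumes "0 < (d::real)"
  shows "\<forall>\<^sub>F k in sequentially. 1 \<le> real k * d"
  using filterlim_tendsto_pos_mult_at_top[OF tendsto_const assms filterlim_real_sequentially]
  by (simp add: filterlim_at_top mult.commute)

lemma ramp_tendsto_less_indicator:
  "(\<lambda>k. max 0 (min 1 (real k * (x - t)))) \<longlonglongrightarrow> (if t < x then 1 else (0::real))"
proof (cases "t < x")
  case True
  have "\<forall>\<^sub>F k in sequentially. max 0 (min 1 (real k * (x - t))) = 1"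
    using eventually_one_le_real_mult[of "x - t"] True by (auto elim!: eventually_mono)
  then show ?thesis using True by (simp add: tendsto_eventually)
next
  case False
  then have "max 0 (min 1 (real k * (x - t))) = 0" for k
    using mult_nonneg_nonpos[of "real k" "x - t"] by auto
  then show ?thesis using False by simp
qed

lemma ramp_tendsto_le_indicator:
  "(\<lambda>k. max 0 (min 1 (1 - real k * (t - x)))) \<longlonglongrightarrow> (if t \<le> x then 1 else (0::real))"
proof (cases "t \<le> x")
  case True
  then have "max 0 (min 1 (1 - real k * (t - x))) = 1" for k
    using mult_nonneg_nonpos[of "real k" "t - x"] by auto
  then show ?thesis using True by simp
next
  case False
  have "\<forall>\<^sub>F k in sequentially. max 0 (min 1 (1 - real k * (t - x))) = 0"
    using eventually_one_le_real_mult[of "t - x"] False by (auto elim!: eventually_mono)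
  then show ?thesis using False by (simp add: tendsto_eventually)
qed

lemma step_at_comp_baire_class1:
  fixes g :: "(nat \<Rightarrow> nat) \<Rightarrow> real"
  assumes "continuous_on UNIV g"
  shows "(\<lambda>w. step_at x c (g w)) \<in> baire_class1"
proof (rule baire_class1_comp_continuous[OF _ _ assms])
  let ?h = "\<lambda>k t. (1 - c) * max 0 (min 1 (real k * (x - t)))
                 + c * max 0 (min 1 (1 - real k * (t - x)))"
  show "continuous_on UNIV (?h k)" for k
    by (intro continuous_intros)
  have "step_at x c t = (1 - c) * (if t < x then 1 else 0) + c * (if t \<le> x then 1 else 0)" for t
    by (simp add: step_at_def)
  then show "(\<lambda>k. ?h k t) \<longlonglongrightarrow> step_at x c t" for t
    by (simp only:) (intro tendsto_add tendsto_mult_left ramp_tendsto_less_indicator ramp_tendsto_le_indicator)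
qed

section \<open>The topology of the split interval\<close>

lemma continuous_map_locally_constant:
  fixes f :: "'a \<Rightarrow> 'b::topological_space"
  assumes "\<And>p. p \<in> topspace X \<Longrightarrow> \<exists>U. openin X U \<and> p \<in> U \<and> (\<forall>q\<in>U. f q = f p)"
  shows "continuous_map X euclidean f"
  unfolding continuous_map_atin
proof
  fix p assume "p \<in> topspace X"
  then obtain U where "openin X U" "p \<in> U" "\<forall>q\<in>U. f q = f p"
    using assms by blast
  then have "eventually (\<lambda>q. f q = f p) (atin X p)"
    unfolding eventually_atin by blast
  then show "limitin euclidean f (f p) (atin X p)"
    by (simp add: tendsto_eventually)
qed

text \<open>The jump value at x is 0, 1 or 1/i according as i = 0, i = 1 or i \<ge> 2 (recall
  inverse 0 = 0). Value 0 makes the code of (x, 0) a pointwise limit of codes of points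
  approaching x from the left, and value 1 does the same for (x, 1) from the right, matching the
  neighbourhoods of the split interval.\<close>

definition split_code :: "real \<times> nat \<Rightarrow> real \<Rightarrow> real" where
  "split_code p = step_at (fst p) (inverse (real (snd p)))"

lemma isolated_in_split_interval_basis:
  "x \<in> {0..1} \<Longrightarrow> 2 \<le> i \<Longrightarrow> i < n \<Longrightarrow> {(x, i)} \<in> split_interval_basis n"
  "{(0, 0)} \<in> split_interval_basis n"
  "{(1, 1)} \<in> split_interval_basis n"
  unfolding split_interval_basis_def by blast+

lemma left_nbhd_in_split_interval_basis:
  "x \<in> {0..1} \<Longrightarrow> 0 < x \<Longrightarrow> z \<in> {0..1} \<Longrightarrow> z < x \<Longrightarrow>
   insert (x, 0) {(y, j). z < y \<and> y < x \<and> j < n} \<in> split_interval_basis n"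
  unfolding split_interval_basis_def
  by (intro UnI1 UnI2 CollectI exI conjI) (rule refl | assumption)+

lemma right_nbhd_in_split_interval_basis:
  "x \<in> {0..1} \<Longrightarrow> x < 1 \<Longrightarrow> z \<in> {0..1} \<Longrightarrow> x < z \<Longrightarrow>
   insert (x, 1) {(y, j). x < y \<and> y < z \<and> j < n} \<in> split_interval_basis n"
  unfolding split_interval_basis_def
  by (intro UnI2 CollectI exI conjI) (rule refl | assumption)+

lemma split_interval_basis_locally_constant:
  assumes "x \<in> {0..1}" "i < n"
  shows "\<exists>B\<in>split_interval_basis n. (x, i) \<in> B \<and> (\<forall>q\<in>B. split_code q t = split_code (x, i) t)"
proof -
  have "0 \<le> x" "x \<le> 1"
    using assms(1) by auto
  then consider "2 \<le> i" | "i = 0" "x = 0" | "i = 1" "x = 1" | "i = 0" "0 < x" | "i = 1" "x < 1"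
    by linarith
  then show ?thesis
  proof cases
    case 1
    then show ?thesis
      using assms isolated_in_split_interval_basis(1) by blast
  next
    case 2
    then show ?thesis
      using isolated_in_split_interval_basis(2) by blast
  next
    case 3
    then show ?thesis
      using isolated_in_split_interval_basis(3) by blast
  next
    case 4
    define z where "z = (if t < x then max 0 t else 0)"
    have "z \<in> {0..1}" "z < x"
      using 4 assms by (auto simp: z_def)
    moreover have "\<forall>q\<in>insert (x, 0) {(y, j). z < y \<and> y < x \<and> j < n}. split_code q t = split_code (x, i) t"
      using 4 by (auto simp: split_code_def step_at_def z_def split: if_splits)
    ultimately show ?thesis
      using 4 assms left_nbhd_in_split_interval_basis by blast
  next
    case 5
    define z where "z = (if x < t then min 1 t else 1)"
    have "z \<in> {0..1}" "x < z"
      using 5 assms by (auto simp: z_def)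
    moreover have "\<forall>q\<in>insert (x, 1) {(y, j). x < y \<and> y < z \<and> j < n}. split_code q t = split_code (x, i) t"
      using 5 by (auto simp: split_code_def step_at_def z_def split: if_splits)
    ultimately show ?thesis
      using 5 assms right_nbhd_in_split_interval_basis by blast
  qed
qed

lemma topspace_split_interval:
  assumes "2 \<le> n"
  shows "topspace (split_interval n) = {0..1} \<times> {..<n}"
proof
  have "B \<subseteq> {0..1} \<times> {..<n}" if "B \<in> split_interval_basis n" for B
    using that assms unfolding split_interval_basis_def
    by (elim UnE CollectE exE conjE insertE emptyE) auto
  then show "topspace (split_interval n) \<subseteq> {0..1} \<times> {..<n}"
    unfolding split_interval_def topology_generated_by_topspace by blast
  show "{0..1} \<times> {..<n} \<subseteq> topspace (split_interval n)"
  proof clarify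
    fix x :: real and i :: nat assume "x \<in> {0..1}" "i < n"
    then obtain B where "B \<in> split_interval_basis n" "(x, i) \<in> B"
      using split_interval_basis_locally_constant by blast
    then show "(x, i) \<in> topspace (split_interval n)"
      unfolding split_interval_def topology_generated_by_topspace by blast
  qed
qed

lemma continuous_map_split_code:
  assumes "2 \<le> n"
  shows "continuous_map (split_interval n) euclideanreal (\<lambda>p. split_code p t)"
proof (rule continuous_map_locally_constant)
  fix p assume "p \<in> topspace (split_interval n)"
  then obtain x i where p: "p = (x, i)" "x \<in> {0..1}" "i < n"
    using topspace_split_interval[OF assms] by auto
  then obtain B where "B \<in> split_interval_basis n" "p \<in> B" "\<forall>q\<in>B. split_code q t = split_code p t"
    using split_interval_basis_locally_constant[OF p(2,3), of t] p(1) by blast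
  then show "\<exists>U. openin (split_interval n) U \<and> p \<in> U \<and> (\<forall>q\<in>U. split_code q t = split_code p t)"
    unfolding split_interval_def by (meson topology_generated_by_Basis)
qed

section \<open>Compactness of the split interval\<close>

lemma real_induction:
  fixes a b :: real
  assumes "a \<le> b" "P a"
    and left: "\<And>s. a < s \<Longrightarrow> s \<le> b \<Longrightarrow> \<exists>z<s. \<forall>t. z < t \<longrightarrow> t < s \<longrightarrow> P t \<longrightarrow> P s"
    and right: "\<And>s. a \<le> s \<Longrightarrow> s < b \<Longrightarrow> P s \<Longrightarrow> \<exists>z>s. \<forall>t. s < t \<longrightarrow> t < z \<longrightarrow> P t"
  shows "P b"
proof -
  define G where "G = {t. a \<le> t \<and> t \<le> b \<and> P t}"
  define s where "s = Sup G"
  have aG: "a \<in> G" and bdd: "bdd_above G"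
    using assms(1,2) unfolding G_def by (auto intro: bdd_aboveI[of _ b])
  have upper: "t \<le> s" if "t \<in> G" for t
    unfolding s_def using that bdd by (rule cSup_upper)
  have s: "a \<le> s" "s \<le> b"
    using upper[OF aG] unfolding s_def using aG by (auto intro!: cSup_least simp: G_def)
  have "P s"
  proof (cases "s = a")
    case True
    then show ?thesis using assms(2) by simp
  next
    case False
    then obtain z where "z < s" and z: "\<forall>t. z < t \<longrightarrow> t < s \<longrightarrow> P t \<longrightarrow> P s"
      using left s by force
    then obtain t where "t \<in> G" "z < t"
      using less_cSup_iff[OF _ bdd] aG unfolding s_def by blast
    then show ?thesis
      using z upper[of t] unfolding G_def by fastforce
  qed
  moreover have "s = b"
  proof (rule ccontr)
    assume "s \<noteq> b"
    with s \<open>P s\<close> obtain z where "s < z" and z: "\<forall>t. s < t \<longrightarrow> t < z \<longrightarrow> P t"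
      using right by force
    define t where "t = (s + min z b) / 2"
    have "s < t" "t < z" "t \<le> b"
      using \<open>s < z\<close> \<open>s \<noteq> b\<close> s unfolding t_def by auto
    then have "t \<in> G"
      using z s unfolding G_def by auto
    then show False
      using upper \<open>s < t\<close> by fastforce
  qed
  ultimately show ?thesis by simp
qed

definition finitely_covered :: "'a set set \<Rightarrow> 'a set \<Rightarrow> bool" where
  "finitely_covered \<U> A \<longleftrightarrow> (\<exists>\<F>. finite \<F> \<and> \<F> \<subseteq> \<U> \<and> A \<subseteq> \<Union>\<F>)"

lemma finitely_covered_Un:
  assumes "finitely_covered \<U> A" "finitely_covered \<U> B"
  shows "finitely_covered \<U> (A \<union> B)"
proof -
  obtain \<F> \<G> where "finite \<F>" "\<F> \<subseteq> \<U>" "A \<subseteq> \<Union>\<F>" "finite \<G>" "\<G> \<subseteq> \<U>" "B \<subseteq> \<Union>\<G>"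
    using assms unfolding finitely_covered_def by blast
  then show ?thesis
    unfolding finitely_covered_def by (intro exI[of _ "\<F> \<union> \<G>"]) auto
qed

lemma finitely_covered_subset:
  "A \<subseteq> B \<Longrightarrow> finitely_covered \<U> B \<Longrightarrow> finitely_covered \<U> A"
  unfolding finitely_covered_def by blast

lemma finitely_covered_finite:
  "finite A \<Longrightarrow> A \<subseteq> \<Union>\<U> \<Longrightarrow> finitely_covered \<U> A"
  unfolding finitely_covered_def by (meson finite_subset_Union)

lemma finitely_covered_member:
  "W \<in> \<U> \<Longrightarrow> finitely_covered \<U> W"
  unfolding finitely_covered_def by (intro exI[of _ "{W}"]) auto

lemma split_interval_left_nbhd:
  assumes "openin (split_interval n) U" "(s, 0) \<in> U" "0 < s"
  shows "\<exists>z<s. \<forall>y j. z < y \<and> y < s \<and> j < n \<longrightarrow> (y, j) \<in> U"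
  using openin_topology_generated_by[OF assms(1)[unfolded split_interval_def]] assms(2,3)
proof (induction rule: generate_topology_on.induct)
  case (Int a b)
  then obtain z1 z2 where "z1 < s" "\<forall>y j. z1 < y \<and> y < s \<and> j < n \<longrightarrow> (y, j) \<in> a"
    "z2 < s" "\<forall>y j. z2 < y \<and> y < s \<and> j < n \<longrightarrow> (y, j) \<in> b" by auto
  then show ?case by (intro exI[of _ "max z1 z2"]) auto
next
  case (UN K)
  then obtain k where "k \<in> K" "(s, 0) \<in> k" by auto
  with UN.IH[of k] UN.prems show ?case by blast
next
  case (Basis B)
  then show ?case unfolding split_interval_basis_def
  proof (elim UnE CollectE exE conjE insertE emptyE)
    fix x z assume "B = insert (x, 0) {(y, i). z < y \<and> y < x \<and> i < n}" "z < x"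
    then show ?thesis using Basis.prems by (intro exI[of _ z]) auto
  next
    fix x z assume "B = insert (x, 1) {(y, i). x < y \<and> y < z \<and> i < n}" "x < z"
    then show ?thesis using Basis.prems by (intro exI[of _ x]) auto
  qed auto
qed simp

lemma split_interval_right_nbhd:
  assumes "openin (split_interval n) U" "(s, 1) \<in> U" "s < 1"
  shows "\<exists>z>s. \<forall>y j. s < y \<and> y < z \<and> j < n \<longrightarrow> (y, j) \<in> U"
  using openin_topology_generated_by[OF assms(1)[unfolded split_interval_def]] assms(2,3)
proof (induction rule: generate_topology_on.induct)
  case (Int a b)
  then obtain z1 z2 where "z1 > s" "\<forall>y j. s < y \<and> y < z1 \<and> j < n \<longrightarrow> (y, j) \<in> a"
    "z2 > s" "\<forall>y j. s < y \<and> y < z2 \<and> j < n \<longrightarrow> (y, j) \<in> b" by auto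
  then show ?case by (intro exI[of _ "min z1 z2"]) auto
next
  case (UN K)
  then obtain k where "k \<in> K" "(s, 1) \<in> k" by auto
  with UN.IH[of k] UN.prems show ?case by blast
next
  case (Basis B)
  then show ?case unfolding split_interval_basis_def
  proof (elim UnE CollectE exE conjE insertE emptyE)
    fix x z assume "B = insert (x, 0) {(y, i). z < y \<and> y < x \<and> i < n}" "z < x"
    then show ?thesis using Basis.prems by (intro exI[of _ x]) auto
  next
    fix x z assume "B = insert (x, 1) {(y, i). x < y \<and> y < z \<and> i < n}" "x < z"
    then show ?thesis using Basis.prems by (intro exI[of _ z]) auto
  qed auto
qed simp

definition split_segment :: "nat \<Rightarrow> real \<Rightarrow> (real \<times> nat) set" where
  "split_segment n t = {p \<in> {0..1} \<times> {..<n}. fst p \<le> t}"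

lemma split_segment_cover_left_step:
  assumes "2 \<le> n" and opn: "\<forall>U\<in>\<U>. openin (split_interval n) U"
    and cov: "{0..1} \<times> {..<n} \<subseteq> \<Union>\<U>" and "0 < s" "s \<le> 1"
  shows "\<exists>z<s. \<forall>t. z < t \<longrightarrow> t < s \<longrightarrow> finitely_covered \<U> (split_segment n t)
           \<longrightarrow> finitely_covered \<U> (split_segment n s)"
proof -
  have "(s, 0) \<in> {0..1} \<times> {..<n}"
    using assms(1,4,5) by auto
  then obtain W where W: "W \<in> \<U>" "(s, 0) \<in> W"
    using cov by blast
  obtain z where "z < s" and z: "\<forall>y j. z < y \<and> y < s \<and> j < n \<longrightarrow> (y, j) \<in> W"
    using split_interval_left_nbhd[OF bspec[OF opn W(1)] W(2) \<open>0 < s\<close>] by blast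
  have "{s} \<times> {..<n} \<subseteq> {0..1} \<times> {..<n}"
    using assms(4,5) by auto
  from finitely_covered_finite[OF _ order_trans[OF this cov]]
  have fibre: "finitely_covered \<U> ({s} \<times> {..<n})"
    by simp
  have "finitely_covered \<U> (split_segment n s)"
    if "z < t" "finitely_covered \<U> (split_segment n t)" for t
  proof (rule finitely_covered_subset)
    show "split_segment n s \<subseteq> split_segment n t \<union> W \<union> {s} \<times> {..<n}"
    proof
      fix p assume p: "p \<in> split_segment n s"
      then obtain y j where y: "p = (y, j)" "y \<le> s" "j < n"
        unfolding split_segment_def by auto
      show "p \<in> split_segment n t \<union> W \<union> {s} \<times> {..<n}"
      proof (cases "y \<le> t \<or> y = s")
        case True
        then show ?thesis
          using p y unfolding split_segment_def by auto
      next
        case False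
        then have "(y, j) \<in> W"
          using z \<open>z < t\<close> y by auto
        then show ?thesis
          using y by simp
      qed
    qed
    show "finitely_covered \<U> (split_segment n t \<union> W \<union> {s} \<times> {..<n})"
      using that(2) finitely_covered_member[OF W(1)] fibre by (intro finitely_covered_Un)
  qed
  then show ?thesis
    using \<open>z < s\<close> by blast
qed

lemma split_segment_cover_right_step:
  assumes "2 \<le> n" and opn: "\<forall>U\<in>\<U>. openin (split_interval n) U"
    and cov: "{0..1} \<times> {..<n} \<subseteq> \<Union>\<U>" and "0 \<le> s" "s < 1"
    and "finitely_covered \<U> (split_segment n s)"
  shows "\<exists>z>s. \<forall>t. s < t \<longrightarrow> t < z \<longrightarrow> finitely_covered \<U> (split_segment n t)"
proof -
  have "(s, 1) \<in> {0..1} \<times> {..<n}"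
    using assms(1,4,5) by auto
  then obtain W where W: "W \<in> \<U>" "(s, 1) \<in> W"
    using cov by blast
  obtain z where "s < z" and z: "\<forall>y j. s < y \<and> y < z \<and> j < n \<longrightarrow> (y, j) \<in> W"
    using split_interval_right_nbhd[OF bspec[OF opn W(1)] W(2) \<open>s < 1\<close>] by blast
  have "finitely_covered \<U> (split_segment n t)" if "t < z" for t
  proof (rule finitely_covered_subset)
    show "split_segment n t \<subseteq> split_segment n s \<union> W"
    proof
      fix p assume p: "p \<in> split_segment n t"
      then obtain y j where y: "p = (y, j)" "y \<le> t" "j < n"
        unfolding split_segment_def by auto
      show "p \<in> split_segment n s \<union> W"
      proof (cases "y \<le> s")
        case True
        then show ?thesis
          using p y unfolding split_segment_def by auto
      next
        case False
        then have "(y, j) \<in> W"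
          using z \<open>t < z\<close> y by auto
        then show ?thesis
          using y by simp
      qed
    qed
    show "finitely_covered \<U> (split_segment n s \<union> W)"
      using assms(6) finitely_covered_member[OF W(1)] by (rule finitely_covered_Un)
  qed
  then show ?thesis
    using \<open>s < z\<close> by blast
qed

lemma compact_space_split_interval:
  assumes "2 \<le> n"
  shows "compact_space (split_interval n)"
  unfolding compact_space_alt
proof (intro allI impI, elim conjE)
  fix \<U> assume opn: "\<forall>U\<in>\<U>. openin (split_interval n) U"
    and cover: "topspace (split_interval n) \<subseteq> \<Union>\<U>"
  have cov: "{0..1} \<times> {..<n} \<subseteq> \<Union>\<U>"
    using cover unfolding topspace_split_interval[OF assms] .
  have "finitely_covered \<U> (split_segment n 1)"
  proof (rule real_induction[of 0 1 "\<lambda>t. finitely_covered \<U> (split_segment n t)"])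
    have "split_segment n 0 \<subseteq> {0} \<times> {..<n}"
      unfolding split_segment_def by auto
    moreover have "{0::real} \<times> {..<n} \<subseteq> {0..1} \<times> {..<n}"
      by auto
    from finitely_covered_finite[OF _ order_trans[OF this cov]]
    have "finitely_covered \<U> ({0} \<times> {..<n})"
      by simp
    ultimately show "finitely_covered \<U> (split_segment n 0)"
      by (rule finitely_covered_subset)
  next
    fix s :: real assume "0 < s" "s \<le> 1"
    then show "\<exists>z<s. \<forall>t. z < t \<longrightarrow> t < s \<longrightarrow> finitely_covered \<U> (split_segment n t)
                 \<longrightarrow> finitely_covered \<U> (split_segment n s)"
      by (rule split_segment_cover_left_step[OF assms opn cov])
  next
    fix s :: real assume "0 \<le> s" "s < 1" "finitely_covered \<U> (split_segment n s)"
    then show "\<exists>z>s. \<forall>t. s < t \<longrightarrow> t < z \<longrightarrow> finitely_covered \<U> (split_segment n t)"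
      by (rule split_segment_cover_right_step[OF assms opn cov])
  qed simp
  moreover have "topspace (split_interval n) = split_segment n 1"
    unfolding topspace_split_interval[OF assms] split_segment_def by auto
  ultimately show "\<exists>\<F>. finite \<F> \<and> \<F> \<subseteq> \<U> \<and> topspace (split_interval n) \<subseteq> \<Union>\<F>"
    unfolding finitely_covered_def by simp
qed

section \<open>The embedding into the first Baire class\<close>

lemma split_code_eq_imp_eq:
  assumes "fst p \<in> {0..1}" "fst q \<in> {0..1}"
    and eq: "\<And>t. t \<in> {0..1} \<Longrightarrow> split_code p t = split_code q t"
  shows "p = q"
proof -
  obtain x i y j where p: "p = (x, i)" and q: "q = (y, j)"
    by fastforce
  have "x = y"
  proof (rule ccontr)
    assume "x \<noteq> y"
    then have "step_at x (inverse (real i)) ((x + y) / 2) \<noteq> step_at y (inverse (real j)) ((x + y) / 2)"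
      by (cases "x < y") (auto simp: step_at_def)
    moreover have "(x + y) / 2 \<in> {0..1}"
      using assms(1,2) p q by auto
    ultimately show False
      using eq p q by (auto simp: split_code_def)
  qed
  moreover have "inverse (real i) = inverse (real j)"
    using eq[of x] assms(1) p q \<open>x = y\<close> by (simp add: split_code_def step_at_def)
  ultimately show ?thesis
    using p q by simp
qed

lemma inj_on_split_code_comp_binary_value:
  "inj_on (\<lambda>p w. split_code p (binary_value w)) ({0..1} \<times> UNIV)"
proof (rule inj_onI)
  fix p q :: "real \<times> nat"
  assume "p \<in> {0..1} \<times> UNIV" "q \<in> {0..1} \<times> UNIV"
    and eq: "(\<lambda>w. split_code p (binary_value w)) = (\<lambda>w. split_code q (binary_value w))"
  have "split_code p t = split_code q t" if "t \<in> {0..1}" for t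
    using binary_value_surj[OF that] fun_cong[OF eq] by metis
  then show "p = q"
    using \<open>p \<in> {0..1} \<times> UNIV\<close> \<open>q \<in> {0..1} \<times> UNIV\<close> by (intro split_code_eq_imp_eq) auto
qed

lemma continuous_map_split_code_comp_binary_value:
  assumes "2 \<le> n"
  shows "continuous_map (split_interval n) euclidean (\<lambda>p w. split_code p (binary_value w))"
proof -
  have "continuous_map (split_interval n) (product_topology (\<lambda>_. euclideanreal) UNIV)
          (\<lambda>p w. split_code p (binary_value w))"
    unfolding continuous_map_componentwise_UNIV using continuous_map_split_code[OF assms] by blast
  then show ?thesis
    by (simp add: euclidean_product_topology)
qed

theorem mainTheorem5:
  fixes n :: nat
  assumes "n \<ge> 2"
  shows "rosenthal_compactum (split_interval n)"
proof -
  let ?X = "split_interval n" and ?F = "\<lambda>p w. split_code p (binary_value w)"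
  note cont = continuous_map_split_code_comp_binary_value[OF assms]
  note compact = compact_space_split_interval[OF assms]
  have "Hausdorff_space (euclidean :: ((nat \<Rightarrow> nat) \<Rightarrow> real) topology)"
    by (metis Hausdorff_space_euclidean Hausdorff_space_product_topology euclidean_product_topology)
  moreover have "inj_on ?F (topspace ?X)"
    using inj_on_split_code_comp_binary_value
    by (rule inj_on_subset) (auto simp: topspace_split_interval[OF assms])
  ultimately have "embedding_map ?X euclidean ?F"
    using continuous_imp_embedding_map[OF cont compact] by blast
  moreover have "compact (?F ` topspace ?X)"
    using image_compactin[OF _ cont] compact by (simp add: compact_space_def)
  moreover have "?F ` topspace ?X \<subseteq> baire_class1"
    unfolding split_code_def using step_at_comp_baire_class1[OF continuous_on_binary_value] by blast
  ultimately show ?thesis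
    unfolding rosenthal_compactum_def embedding_map_def
    by (blast intro: homeomorphic_map_imp_homeomorphic_space)
qed

end
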